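(* Let $A$ be a nonempty finite poset. Suppose that for every $n\ge0$, every poset $X$, and every pushout square in $\mathbf{Pos}$ $$\begin{array}{ccc}\Pi\mathrm{Sd}^2\partial\Delta[n]&\to&X\\ \downarrow&&\downarrow\\ \Pi\mathrm{Sd}^2\Delta[n]&\to&Y\end{array}$$ (with left map induced by the boundary inclusion), if $A$ is a retract of $Y$ then $A$ is a retract of $X$. Then $A$ is not cofibrant in the model structure on $\mathbf{Pos}$.
   Context: $\Pi\mathrm{Sd}^2\Delta[n]$ is the poset whose elements are chains $S_0\subsetneq\cdots\subsetneq S_k$ of nonempty subsets of $\{0,\dots,n\}$, ordered by inclusion of chains (viewed as sets of subsets); $\Pi\mathrm{Sd}^2\partial\Delta[n]$ is the subposet of chains with $S_k\neq\{0,\dots,n\}$. The model structure on $\mathbf{Pos}$: a map $f$ is a weak equivalence/fibration iff it is so as a functor in the Thomason model structure on $\mathbf{Cat}$ (i.e. $\mathrm{Ex}^2N f$ is a weak equivalence/fibration of simplicial sets); it is compactly generated with generating cofibrations the inclusions $\Pi\mathrm{Sd}^2\partial\Delta[n]\to\Pi\mathrm{Sd}^2\Delta[n]$. An object $A$ is a retract of $Y$ if there are maps $A\to Y\to A$ composing to $\mathrm{id}_A$. *)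

theory Defs
  imports Main
begin

text \<open>All "large" notions (pushouts, fibrations,
  cofibrancy) are relativised to posets whose elements live in a fixed universe type.\<close>

type_synonym 'a pos = "'a set \<times> ('a \<times> 'a) set"

definition pcar :: "'a pos \<Rightarrow> 'a set" where "pcar P = fst P"
definition pord :: "'a pos \<Rightarrow> ('a \<times> 'a) set" where "pord P = snd P"

definition is_pos :: "'a pos \<Rightarrow> bool" where
  "is_pos P \<longleftrightarrow> pord P \<subseteq> pcar P \<times> pcar P
     \<and> (\<forall>x\<in>pcar P. (x, x) \<in> pord P)
     \<and> (\<forall>x y. (x, y) \<in> pord P \<and> (y, x) \<in> pord P \<longrightarrow> x = y)
     \<and> (\<forall>x y z. (x, y) \<in> pord P \<and> (y, z) \<in> pord P \<longrightarrow> (x, z) \<in> pord P)"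

definition pos_hom :: "'a pos \<Rightarrow> 'b pos \<Rightarrow> ('a \<Rightarrow> 'b) \<Rightarrow> bool" where
  "pos_hom P Q f \<longleftrightarrow> (\<forall>x\<in>pcar P. f x \<in> pcar Q)
     \<and> (\<forall>x y. (x, y) \<in> pord P \<longrightarrow> (f x, f y) \<in> pord Q)"

definition pos_retract :: "'a pos \<Rightarrow> 'b pos \<Rightarrow> bool" where
  "pos_retract A Y \<longleftrightarrow> (\<exists>i r. pos_hom A Y i \<and> pos_hom Y A r \<and> (\<forall>x\<in>pcar A. r (i x) = x))"

text \<open>Pi Sd^2 Delta[n]: chains of nonempty subsets of {0..n} (as sets of subsets),
  ordered by inclusion; Pi Sd^2 dDelta[n]: those chains whose top element is not {0..n}.\<close>
definition is_chain_subsets :: "nat \<Rightarrow> nat set set \<Rightarrow> bool" where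
  "is_chain_subsets n C \<longleftrightarrow> C \<noteq> {}
     \<and> (\<forall>S\<in>C. S \<noteq> {} \<and> S \<subseteq> {0..n})
     \<and> (\<forall>S\<in>C. \<forall>T\<in>C. S \<subseteq> T \<or> T \<subseteq> S)"

definition sd2 :: "nat \<Rightarrow> nat set set pos" where
  "sd2 n = ({C. is_chain_subsets n C},
            {(C, D). is_chain_subsets n C \<and> is_chain_subsets n D \<and> C \<subseteq> D})"

definition sd2_bdry :: "nat \<Rightarrow> nat set set pos" where
  "sd2_bdry n = ({C. is_chain_subsets n C \<and> {0..n} \<notin> C},
                 {(C, D). is_chain_subsets n C \<and> is_chain_subsets n D
                          \<and> {0..n} \<notin> C \<and> {0..n} \<notin> D \<and> C \<subseteq> D})"

definition pos_pushout ::
  "nat \<Rightarrow> 'u pos \<Rightarrow> 'u pos \<Rightarrow> (nat set set \<Rightarrow> 'u) \<Rightarrow> ('u \<Rightarrow> 'u) \<Rightarrow> (nat set set \<Rightarrow> 'u) \<Rightarrow> bool"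
where
  "pos_pushout n X Y f g h \<longleftrightarrow>
     is_pos X \<and> is_pos Y \<and> pos_hom (sd2_bdry n) X f \<and> pos_hom X Y g \<and> pos_hom (sd2 n) Y h
     \<and> (\<forall>c\<in>pcar (sd2_bdry n). g (f c) = h c)
     \<and> (\<forall>(Z :: 'u pos) g' h'. is_pos Z \<and> pos_hom X Z g' \<and> pos_hom (sd2 n) Z h'
          \<and> (\<forall>c\<in>pcar (sd2_bdry n). g' (f c) = h' c) \<longrightarrow>
          (\<exists>k. pos_hom Y Z k \<and> (\<forall>x\<in>pcar X. k (g x) = g' x) \<and> (\<forall>c\<in>pcar (sd2 n). k (h c) = h' c)
             \<and> (\<forall>k'. pos_hom Y Z k' \<and> (\<forall>x\<in>pcar X. k' (g x) = g' x)
                     \<and> (\<forall>c\<in>pcar (sd2 n). k' (h c) = h' c) \<longrightarrow> (\<forall>y\<in>pcar Y. k' y = k y))))"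

text \<open>Trivial fibrations of a cofibrantly generated model structure are exactly the maps
  with the right lifting property against the generating cofibrations.\<close>
definition triv_fib :: "'u pos \<Rightarrow> 'u pos \<Rightarrow> ('u \<Rightarrow> 'u) \<Rightarrow> bool" where
  "triv_fib E B p \<longleftrightarrow> is_pos E \<and> is_pos B \<and> pos_hom E B p
     \<and> (\<forall>n a b. pos_hom (sd2_bdry n) E a \<and> pos_hom (sd2 n) B b
          \<and> (\<forall>c\<in>pcar (sd2_bdry n). p (a c) = b c) \<longrightarrow>
          (\<exists>l. pos_hom (sd2 n) E l \<and> (\<forall>c\<in>pcar (sd2_bdry n). l c = a c)
               \<and> (\<forall>c\<in>pcar (sd2 n). p (l c) = b c)))"

definition pos_cofibrant :: "'u pos \<Rightarrow> bool" where
  "pos_cofibrant A \<longleftrightarrow> is_pos A \<and>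
     (\<forall>(E :: 'u pos) B p b. triv_fib E B p \<and> pos_hom A B b \<longrightarrow>
        (\<exists>l. pos_hom A E l \<and> (\<forall>x\<in>pcar A. p (l x) = b x)))"

end

theory Submission
  imports Defs "HOL-Library.Countable_Set" "HOL-Analysis.Finite_Cartesian_Product"
begin

(* Run the small object argument for the generating cofibrations over A, starting from the
   empty poset: attaching one cell for every lifting problem against the current map to A, each
   problem infinitely often, gives a sequential union E of pushouts and a map p : E -> A with the
   right lifting property against every generating cofibration, i.e. a trivial fibration. If A
   were cofibrant, id_A would lift through p; since A is finite the lift lands in a finite stage,
   so A is a retract of that stage. The hypothesis moves retracts backwards along each pushout,
   and A would be a retract of the empty poset. *)

lemma pcar_sd2: "pcar (sd2 n) = {C. is_chain_subsets n C}"
  by (simp add: sd2_def pcar_def)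

lemma pcar_sd2_bdry: "pcar (sd2_bdry n) = {C. is_chain_subsets n C \<and> {0..n} \<notin> C}"
  by (simp add: sd2_bdry_def pcar_def)

lemma pord_sd2: "pord (sd2 n) = {(C, D). C \<in> pcar (sd2 n) \<and> D \<in> pcar (sd2 n) \<and> C \<subseteq> D}"
  by (simp add: sd2_def pcar_def pord_def)

lemma pord_sd2_bdry:
  "pord (sd2_bdry n) = {(C, D). C \<in> pcar (sd2_bdry n) \<and> D \<in> pcar (sd2_bdry n) \<and> C \<subseteq> D}"
  by (auto simp: sd2_bdry_def pcar_def pord_def)

lemma pcar_sd2_bdry_subset: "pcar (sd2_bdry n) \<subseteq> pcar (sd2 n)"
  by (auto simp: pcar_sd2 pcar_sd2_bdry)

lemma finite_pcar_sd2: "finite (pcar (sd2 n))"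
proof (rule finite_subset)
  show "pcar (sd2 n) \<subseteq> Pow (Pow {0..n})"
    by (auto simp: pcar_sd2 is_chain_subsets_def)
qed simp

lemma finite_pcar_sd2_bdry: "finite (pcar (sd2_bdry n))"
  using finite_pcar_sd2 pcar_sd2_bdry_subset by (rule finite_subset[rotated])

definition interior_chains :: "nat \<Rightarrow> nat set set set" where
  "interior_chains n = pcar (sd2 n) - pcar (sd2_bdry n)"

lemma interior_chains_upward_closed:
  "C \<in> interior_chains n \<Longrightarrow> D \<in> pcar (sd2 n) \<Longrightarrow> C \<subseteq> D \<Longrightarrow> D \<in> interior_chains n"
  by (auto simp: interior_chains_def pcar_sd2 pcar_sd2_bdry)

lemma is_posD:
  assumes "is_pos P"
  shows "pord P \<subseteq> pcar P \<times> pcar P"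
    and "x \<in> pcar P \<Longrightarrow> (x, x) \<in> pord P"
    and "(x, y) \<in> pord P \<Longrightarrow> (y, x) \<in> pord P \<Longrightarrow> x = y"
    and "(x, y) \<in> pord P \<Longrightarrow> (y, z) \<in> pord P \<Longrightarrow> (x, z) \<in> pord P"
  using assms unfolding is_pos_def by blast+

lemma pos_hom_cong:
  assumes "pos_hom P Q f" and "pord P \<subseteq> pcar P \<times> pcar P" and "\<And>x. x \<in> pcar P \<Longrightarrow> g x = f x"
  shows "pos_hom P Q g"
  using assms unfolding pos_hom_def by (metis (no_types, lifting) mem_Sigma_iff subsetD)

lemma pos_hom_mono_target:
  "pos_hom P Q f \<Longrightarrow> pcar Q \<subseteq> pcar Q' \<Longrightarrow> pord Q \<subseteq> pord Q' \<Longrightarrow> pos_hom P Q' f"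
  unfolding pos_hom_def by blast

lemma not_pos_retract_empty: "pcar A \<noteq> {} \<Longrightarrow> \<not> pos_retract A ({}, {})"
  unfolding pos_retract_def pos_hom_def by (auto simp: pcar_def)

definition pos_Union :: "(nat \<Rightarrow> 'a pos) \<Rightarrow> 'a pos" where
  "pos_Union X = (\<Union>k. pcar (X k), \<Union>k. pord (X k))"

lemma pcar_pos_Union [simp]: "pcar (pos_Union X) = (\<Union>k. pcar (X k))"
  by (simp add: pos_Union_def pcar_def)

lemma pord_pos_Union [simp]: "pord (pos_Union X) = (\<Union>k. pord (X k))"
  by (simp add: pos_Union_def pord_def)

lemma is_pos_pos_Union:
  assumes pos: "\<And>k. is_pos (X k)" and ord: "incseq (\<lambda>k. pord (X k))"
  shows "is_pos (pos_Union X)"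
proof -
  have common_stage: "\<exists>k. (x, y) \<in> pord (X k) \<and> (y, z) \<in> pord (X k)"
    if xyz: "(x, y) \<in> pord (pos_Union X)" "(y, z) \<in> pord (pos_Union X)" for x y z
  proof -
    obtain i j where "(x, y) \<in> pord (X i)" "(y, z) \<in> pord (X j)"
      using xyz unfolding pord_pos_Union by blast
    then show ?thesis
      using incseqD[OF ord, of i "max i j"] incseqD[OF ord, of j "max i j"] by auto
  qed
  show ?thesis
    unfolding is_pos_def
  proof (intro conjI allI impI ballI)
    show "pord (pos_Union X) \<subseteq> pcar (pos_Union X) \<times> pcar (pos_Union X)"
      using is_posD(1)[OF pos] by fastforce
    show "(x, x) \<in> pord (pos_Union X)" if "x \<in> pcar (pos_Union X)" for x
      using that is_posD(2)[OF pos] by fastforce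
  next
    fix x y assume "(x, y) \<in> pord (pos_Union X) \<and> (y, x) \<in> pord (pos_Union X)"
    then obtain k where "(x, y) \<in> pord (X k)" "(y, x) \<in> pord (X k)"
      using common_stage by blast
    then show "x = y"
      by (rule is_posD(3)[OF pos])
  next
    fix x y z assume "(x, y) \<in> pord (pos_Union X) \<and> (y, z) \<in> pord (pos_Union X)"
    then obtain k where "(x, y) \<in> pord (X k)" "(y, z) \<in> pord (X k)"
      using common_stage by blast
    then have "(x, z) \<in> pord (X k)"
      by (rule is_posD(4)[OF pos])
    then show "(x, z) \<in> pord (pos_Union X)"
      by auto
  qed
qed

lemma pos_hom_pos_Union: "pos_hom P (X k) f \<Longrightarrow> pos_hom P (pos_Union X) f"
  by (rule pos_hom_mono_target) auto

lemma finite_subset_incseq_UN: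
  fixes F :: "nat \<Rightarrow> 'a set"
  assumes "finite S" and "S \<subseteq> (\<Union>k. F k)" and "incseq F"
  shows "\<exists>m. S \<subseteq> F m"
  using assms(1,2)
proof (induction S rule: finite_induct)
  case (insert x S)
  then obtain m j where "S \<subseteq> F m" "x \<in> F j"
    by blast
  then have "insert x S \<subseteq> F (max m j)"
    using incseqD[OF \<open>incseq F\<close>, of m "max m j"] incseqD[OF \<open>incseq F\<close>, of j "max m j"] by auto
  then show ?case ..
qed simp

lemma pos_hom_pos_Union_eventually:
  assumes f: "pos_hom P (pos_Union X) f" and "finite (pcar P)" and P: "pord P \<subseteq> pcar P \<times> pcar P"
    and car: "incseq (\<lambda>k. pcar (X k))" and ord: "incseq (\<lambda>k. pord (X k))"
  obtains m where "\<And>j. m \<le> j \<Longrightarrow> pos_hom P (X j) f"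
proof -
  have "finite (pord P)"
    using P \<open>finite (pcar P)\<close> by (simp add: finite_subset)
  have "\<exists>m. f ` pcar P \<subseteq> pcar (X m)"
    by (rule finite_subset_incseq_UN[OF _ _ car]) (use f \<open>finite (pcar P)\<close> in \<open>auto simp: pos_hom_def\<close>)
  then obtain m1 where m1: "f ` pcar P \<subseteq> pcar (X m1)" ..
  have "\<exists>m. map_prod f f ` pord P \<subseteq> pord (X m)"
    by (rule finite_subset_incseq_UN[OF _ _ ord]) (use f \<open>finite (pord P)\<close> in \<open>auto simp: pos_hom_def\<close>)
  then obtain m2 where m2: "map_prod f f ` pord P \<subseteq> pord (X m2)" ..
  show thesis
  proof (rule that)
    fix j assume "max m1 m2 \<le> j"
    then have "pcar (X m1) \<subseteq> pcar (X j)" "pord (X m2) \<subseteq> pord (X j)"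
      using incseqD[OF car, of m1 j] incseqD[OF ord, of m2 j] by auto
    then show "pos_hom P (X j) f"
      using m1 m2 unfolding pos_hom_def by auto
  qed
qed

definition attach ::
  "'u pos \<Rightarrow> nat \<Rightarrow> (nat set set \<Rightarrow> 'u) \<Rightarrow> (nat set set \<Rightarrow> 'u) \<Rightarrow> 'u pos" where
  "attach X n a cd =
    (pcar X \<union> cd ` interior_chains n,
     pord X \<union> {(cd c, cd d) | c d. c \<in> interior_chains n \<and> d \<in> interior_chains n \<and> c \<subseteq> d}
       \<union> {(x, cd d) | x d. d \<in> interior_chains n
                         \<and> (\<exists>e\<in>pcar (sd2_bdry n). (x, a e) \<in> pord X \<and> e \<subseteq> d)})"

definition cell_map :: "nat \<Rightarrow> (nat set set \<Rightarrow> 'u) \<Rightarrow> (nat set set \<Rightarrow> 'u) \<Rightarrow> nat set set \<Rightarrow> 'u" where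
  "cell_map n a cd c = (if c \<in> pcar (sd2_bdry n) then a c else cd c)"

lemma pcar_attach: "pcar (attach X n a cd) = pcar X \<union> cd ` interior_chains n"
  by (simp add: attach_def pcar_def)

lemma pord_attach:
  "pord (attach X n a cd) =
     pord X \<union> {(cd c, cd d) | c d. c \<in> interior_chains n \<and> d \<in> interior_chains n \<and> c \<subseteq> d}
       \<union> {(x, cd d) | x d. d \<in> interior_chains n
                         \<and> (\<exists>e\<in>pcar (sd2_bdry n). (x, a e) \<in> pord X \<and> e \<subseteq> d)}"
  by (simp add: attach_def pord_def)

lemma pord_attachE:
  assumes "(x, y) \<in> pord (attach X n a cd)"
  obtains (old) "(x, y) \<in> pord X"
  | (new) c d where "x = cd c" "y = cd d" "c \<in> interior_chains n" "d \<in> interior_chains n" "c \<subseteq> d"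
  | (glued) d e where "y = cd d" "d \<in> interior_chains n" "e \<in> pcar (sd2_bdry n)"
      "(x, a e) \<in> pord X" "e \<subseteq> d"
  using assms unfolding pord_attach by blast

locale cell_attachment =
  fixes X :: "'u pos" and n :: nat and a cd :: "nat set set \<Rightarrow> 'u"
  assumes is_pos_X: "is_pos X" and pos_hom_a: "pos_hom (sd2_bdry n) X a"
    and inj_cd: "inj_on cd (interior_chains n)"
    and cd_fresh: "cd ` interior_chains n \<inter> pcar X = {}"
begin

lemma cd_notin_pord:
  assumes "c \<in> interior_chains n"
  shows "(cd c, y) \<notin> pord X" and "(y, cd c) \<notin> pord X"
  using assms cd_fresh is_posD(1)[OF is_pos_X] by blast+

lemma a_mono: "(e, e') \<in> pord (sd2_bdry n) \<Longrightarrow> (a e, a e') \<in> pord X"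
  using pos_hom_a unfolding pos_hom_def by blast

lemma a_in_pcar: "e \<in> pcar (sd2_bdry n) \<Longrightarrow> a e \<in> pcar X"
  using pos_hom_a unfolding pos_hom_def by blast

lemma pord_attach_antisym:
  assumes xy: "(x, y) \<in> pord (attach X n a cd)" and yx: "(y, x) \<in> pord (attach X n a cd)"
  shows "x = y"
  using xy
proof (cases rule: pord_attachE)
  case old
  with yx have "(y, x) \<in> pord X"
    by (cases rule: pord_attachE) (auto simp: cd_notin_pord)
  with old show ?thesis
    by (rule is_posD(3)[OF is_pos_X])
next
  case (new c d)
  with yx have "d \<subseteq> c"
    by (cases rule: pord_attachE) (auto simp: cd_notin_pord inj_on_eq_iff[OF inj_cd])
  with new show ?thesis
    by auto
next
  case (glued d e)
  with yx show ?thesis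
    by (cases rule: pord_attachE) (auto simp: cd_notin_pord)
qed

lemma pord_attach_trans:
  assumes xy: "(x, y) \<in> pord (attach X n a cd)" and yz: "(y, z) \<in> pord (attach X n a cd)"
  shows "(x, z) \<in> pord (attach X n a cd)"
  using yz
proof (cases rule: pord_attachE)
  case old
  with xy have "(x, y) \<in> pord X"
    by (cases rule: pord_attachE) (auto simp: cd_notin_pord)
  then have "(x, z) \<in> pord X"
    using old by (rule is_posD(4)[OF is_pos_X])
  then show ?thesis
    by (simp add: pord_attach)
next
  case (new c d)
  from xy show ?thesis
  proof (cases rule: pord_attachE)
    case old
    with new show ?thesis
      by (simp add: cd_notin_pord)
  next
    case (new c' d')
    with \<open>y = cd c\<close> \<open>c \<in> interior_chains n\<close> have "d' = c"
      by (simp add: inj_on_eq_iff[OF inj_cd])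
    with new \<open>c \<subseteq> d\<close> \<open>z = cd d\<close> \<open>d \<in> interior_chains n\<close> show ?thesis
      unfolding pord_attach by blast
  next
    case (glued d' e)
    with \<open>y = cd c\<close> \<open>c \<in> interior_chains n\<close> have "d' = c"
      by (simp add: inj_on_eq_iff[OF inj_cd])
    with glued \<open>c \<subseteq> d\<close> \<open>z = cd d\<close> \<open>d \<in> interior_chains n\<close> show ?thesis
      unfolding pord_attach by blast
  qed
next
  case (glued d e)
  with xy have "(x, y) \<in> pord X"
    by (cases rule: pord_attachE) (auto simp: cd_notin_pord)
  with glued have "(x, a e) \<in> pord X"
    by (blast intro: is_posD(4)[OF is_pos_X])
  with glued show ?thesis
    unfolding pord_attach by blast
qed

lemma is_pos_attach: "is_pos (attach X n a cd)"
  unfolding is_pos_def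
proof (intro conjI allI impI ballI)
  show "pord (attach X n a cd) \<subseteq> pcar (attach X n a cd) \<times> pcar (attach X n a cd)"
  proof (rule subrelI)
    fix x y assume "(x, y) \<in> pord (attach X n a cd)"
    then show "(x, y) \<in> pcar (attach X n a cd) \<times> pcar (attach X n a cd)"
      by (cases rule: pord_attachE) (use is_posD(1)[OF is_pos_X] in \<open>auto simp: pcar_attach\<close>)
  qed
  show "(x, x) \<in> pord (attach X n a cd)" if "x \<in> pcar (attach X n a cd)" for x
    using that is_posD(2)[OF is_pos_X] by (auto simp: pcar_attach pord_attach)
qed (auto intro: pord_attach_antisym pord_attach_trans)

lemma pos_hom_attach_inclusion: "pos_hom X (attach X n a cd) id"
  unfolding pos_hom_def by (simp add: pcar_attach pord_attach)

lemma pos_hom_cell_map: "pos_hom (sd2 n) (attach X n a cd) (cell_map n a cd)"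
  unfolding pos_hom_def
proof (intro conjI allI impI ballI)
  fix c assume "c \<in> pcar (sd2 n)"
  then show "cell_map n a cd c \<in> pcar (attach X n a cd)"
    by (auto simp: cell_map_def pcar_attach interior_chains_def a_in_pcar)
next
  fix c d assume "(c, d) \<in> pord (sd2 n)"
  then have c: "c \<in> pcar (sd2 n)" and d: "d \<in> pcar (sd2 n)" and "c \<subseteq> d"
    by (auto simp: pord_sd2)
  consider "c \<in> pcar (sd2_bdry n)" "d \<in> pcar (sd2_bdry n)"
    | "c \<in> pcar (sd2_bdry n)" "d \<in> interior_chains n"
    | "c \<in> interior_chains n" "d \<in> interior_chains n"
    using c d \<open>c \<subseteq> d\<close> interior_chains_upward_closed by (auto simp: interior_chains_def)
  then show "(cell_map n a cd c, cell_map n a cd d) \<in> pord (attach X n a cd)"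
  proof cases
    case 1
    then show ?thesis
      using a_mono \<open>c \<subseteq> d\<close> by (simp add: cell_map_def pord_attach pord_sd2_bdry)
  next
    case 2
    then have "(a c, a c) \<in> pord X"
      by (simp add: a_in_pcar is_posD(2)[OF is_pos_X])
    with 2 \<open>c \<subseteq> d\<close> show ?thesis
      by (auto simp: cell_map_def pord_attach interior_chains_def)
  next
    case 3
    with \<open>c \<subseteq> d\<close> show ?thesis
      by (auto simp: cell_map_def pord_attach interior_chains_def)
  qed
qed

lemma pos_hom_attachI:
  assumes Z: "is_pos Z" and g: "pos_hom X Z g" and h: "pos_hom (sd2 n) Z h"
    and glue: "\<And>c. c \<in> pcar (sd2_bdry n) \<Longrightarrow> g (a c) = h c"
    and q_old: "\<And>x. x \<in> pcar X \<Longrightarrow> q x = g x"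
    and q_new: "\<And>c. c \<in> interior_chains n \<Longrightarrow> q (cd c) = h c"
  shows "pos_hom (attach X n a cd) Z q"
  unfolding pos_hom_def
proof (intro conjI allI impI ballI)
  fix y assume "y \<in> pcar (attach X n a cd)"
  then show "q y \<in> pcar Z"
    using g h q_old q_new by (auto simp: pcar_attach pos_hom_def interior_chains_def)
next
  fix x y assume "(x, y) \<in> pord (attach X n a cd)"
  then show "(q x, q y) \<in> pord Z"
  proof (cases rule: pord_attachE)
    case old
    then show ?thesis
      using g q_old is_posD(1)[OF is_pos_X] unfolding pos_hom_def by auto
  next
    case (new c d)
    then have "(c, d) \<in> pord (sd2 n)"
      by (auto simp: pord_sd2 interior_chains_def)
    with new show ?thesis
      using h q_new unfolding pos_hom_def by simp
  next
    case (glued d e)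
    have "(g x, h e) \<in> pord Z"
      using glued g glue unfolding pos_hom_def by metis
    moreover have "(e, d) \<in> pord (sd2 n)"
      using glued pcar_sd2_bdry_subset by (auto simp: pord_sd2 interior_chains_def)
    then have "(h e, h d) \<in> pord Z"
      using h unfolding pos_hom_def by blast
    ultimately have "(g x, h d) \<in> pord Z"
      by (rule is_posD(4)[OF Z])
    moreover have "x \<in> pcar X"
      using glued is_posD(1)[OF is_pos_X] by auto
    ultimately show ?thesis
      using glued q_old q_new by simp
  qed
qed

lemma pos_pushout_attach: "pos_pushout n X (attach X n a cd) a id (cell_map n a cd)"
  unfolding pos_pushout_def
proof (intro conjI allI impI ballI)
  fix Z :: "'u pos" and g h
  assume "is_pos Z \<and> pos_hom X Z g \<and> pos_hom (sd2 n) Z h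
    \<and> (\<forall>c\<in>pcar (sd2_bdry n). g (a c) = h c)"
  then have Z: "is_pos Z" and g: "pos_hom X Z g" and h: "pos_hom (sd2 n) Z h"
    and glue: "\<And>c. c \<in> pcar (sd2_bdry n) \<Longrightarrow> g (a c) = h c"
    by auto
  define k where "k y = (if y \<in> pcar X then g y else h (the_inv_into (interior_chains n) cd y))"
    for y
  have k_old: "k x = g x" if "x \<in> pcar X" for x
    using that by (simp add: k_def)
  have k_new: "k (cd c) = h c" if "c \<in> interior_chains n" for c
    using that cd_fresh the_inv_into_f_f[OF inj_cd] by (auto simp: k_def)
  have k_cell_map: "k (cell_map n a cd c) = h c" if "c \<in> pcar (sd2 n)" for c
    using that glue k_old k_new a_in_pcar by (auto simp: cell_map_def interior_chains_def)
  show "\<exists>k. pos_hom (attach X n a cd) Z k \<and> (\<forall>x\<in>pcar X. k (id x) = g x)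
      \<and> (\<forall>c\<in>pcar (sd2 n). k (cell_map n a cd c) = h c)
      \<and> (\<forall>k'. pos_hom (attach X n a cd) Z k' \<and> (\<forall>x\<in>pcar X. k' (id x) = g x)
              \<and> (\<forall>c\<in>pcar (sd2 n). k' (cell_map n a cd c) = h c)
            \<longrightarrow> (\<forall>y\<in>pcar (attach X n a cd). k' y = k y))"
  proof (intro exI[of _ k] conjI allI impI ballI)
    show "pos_hom (attach X n a cd) Z k"
      using Z g h glue k_old k_new by (rule pos_hom_attachI)
    show "k (id x) = g x" if "x \<in> pcar X" for x
      using that k_old by simp
    show "k (cell_map n a cd c) = h c" if "c \<in> pcar (sd2 n)" for c
      using that k_cell_map by blast
  next
    fix k' y
    assume "pos_hom (attach X n a cd) Z k' \<and> (\<forall>x\<in>pcar X. k' (id x) = g x)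
      \<and> (\<forall>c\<in>pcar (sd2 n). k' (cell_map n a cd c) = h c)"
    and "y \<in> pcar (attach X n a cd)"
    then show "k' y = k y"
      using k_old k_new by (auto simp: pcar_attach cell_map_def interior_chains_def)
  qed
qed (use is_pos_X pos_hom_a is_pos_attach pos_hom_attach_inclusion pos_hom_cell_map in
      \<open>auto simp: cell_map_def\<close>)

end

locale small_object =
  fixes A :: "'u pos" and f :: "nat \<Rightarrow> 'u"
  assumes is_pos_A: "is_pos A" and finite_A: "finite (pcar A)" and inj_f: "inj f"
begin

text \<open>The interior chain \<open>c\<close> attached at step \<open>k\<close> becomes the element \<open>cell (k, c)\<close> of
  the universe; \<open>f\<close> makes these elements pairwise distinct.\<close>

definition cell_index :: "(nat \<times> nat set set) set" where
  "cell_index = UNIV \<times> (\<Union>n. pcar (sd2 n))"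

lemma cell_in_cell_index: "c \<in> pcar (sd2 n) \<Longrightarrow> (k, c) \<in> cell_index"
  by (auto simp: cell_index_def)

definition cell :: "nat \<times> nat set set \<Rightarrow> 'u" where
  "cell q = f (to_nat_on cell_index q)"

lemma countable_cell_index: "countable cell_index"
  unfolding cell_index_def
  by (intro countable_SIGMA countable_UN countable_finite[OF finite_pcar_sd2]) simp_all

lemma inj_on_cell: "inj_on cell cell_index"
  using inj_on_to_nat_on[OF countable_cell_index] inj_f unfolding cell_def inj_on_def by blast

definition problems :: "(nat \<times> (nat set set \<Rightarrow> 'u) \<times> (nat set set \<Rightarrow> 'u)) set" where
  "problems = (SIGMA n:UNIV. (pcar (sd2_bdry n) \<rightarrow>\<^sub>E cell ` cell_index) \<times> (pcar (sd2 n) \<rightarrow>\<^sub>E pcar A))"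

lemma countable_problems: "countable problems"
  unfolding problems_def
  by (intro countable_SIGMA countable_PiE countable_image countable_cell_index
      finite_pcar_sd2 finite_pcar_sd2_bdry countable_finite[OF finite_A]) simp_all

text \<open>Enumerating along the first component of \<open>prod_decode\<close> visits every problem infinitely
  often, in particular after its data have appeared in some stage.\<close>

definition problem :: "nat \<Rightarrow> nat \<times> (nat set set \<Rightarrow> 'u) \<times> (nat set set \<Rightarrow> 'u)" where
  "problem k = from_nat_into problems (fst (prod_decode k))"

lemma problem_recurs:
  assumes "q \<in> problems"
  obtains j where "m \<le> j" and "problem j = q"
proof -
  obtain i where "from_nat_into problems i = q"
    using from_nat_into_surj[OF countable_problems assms] ..
  then show thesis
    by (intro that[of "prod_encode (i, m)"]) (simp_all add: le_prod_encode_2 problem_def)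
qed

definition prob_dim :: "nat \<Rightarrow> nat" where "prob_dim k = fst (problem k)"
definition prob_top :: "nat \<Rightarrow> nat set set \<Rightarrow> 'u" where "prob_top k = fst (snd (problem k))"
definition prob_bot :: "nat \<Rightarrow> nat set set \<Rightarrow> 'u" where "prob_bot k = snd (snd (problem k))"

text \<open>The map to \<open>A\<close> is fixed before the stages are built: the cell \<open>cell (k, c)\<close> goes
  to the value the \<open>k\<close>-th problem prescribes on \<open>c\<close>.\<close>

definition proj :: "'u \<Rightarrow> 'u" where
  "proj y = (case the_inv_into cell_index cell y of (k, c) \<Rightarrow> prob_bot k c)"

lemma proj_cell: "(k, c) \<in> cell_index \<Longrightarrow> proj (cell (k, c)) = prob_bot k c"
  unfolding proj_def by (simp add: the_inv_into_f_f[OF inj_on_cell])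

definition lifting_problem :: "nat \<Rightarrow> 'u pos \<Rightarrow> bool" where
  "lifting_problem k X \<longleftrightarrow>
     pos_hom (sd2_bdry (prob_dim k)) X (prob_top k) \<and> pos_hom (sd2 (prob_dim k)) A (prob_bot k)
     \<and> (\<forall>c\<in>pcar (sd2_bdry (prob_dim k)). proj (prob_top k c) = prob_bot k c)"

primrec stage :: "nat \<Rightarrow> 'u pos" where
  "stage 0 = ({}, {})"
| "stage (Suc k) =
     (if lifting_problem k (stage k)
      then attach (stage k) (prob_dim k) (prob_top k) (\<lambda>c. cell (k, c)) else stage k)"

lemma cell_attachmentI:
  assumes "is_pos X" and X_cells: "pcar X \<subseteq> cell ` (({..<k} \<times> UNIV) \<inter> cell_index)"
    and "lifting_problem k X"
  shows "cell_attachment X (prob_dim k) (prob_top k) (\<lambda>c. cell (k, c))"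
proof
  show "inj_on (\<lambda>c. cell (k, c)) (interior_chains (prob_dim k))"
  proof (rule inj_onI)
    fix c d
    assume "c \<in> interior_chains (prob_dim k)" "d \<in> interior_chains (prob_dim k)"
      and "cell (k, c) = cell (k, d)"
    then have "(k, c) = (k, d)"
      by (intro inj_onD[OF inj_on_cell]) (auto simp: interior_chains_def cell_in_cell_index)
    then show "c = d"
      by simp
  qed
  show "(\<lambda>c. cell (k, c)) ` interior_chains (prob_dim k) \<inter> pcar X = {}"
    using X_cells inj_on_cell cell_in_cell_index
    by (fastforce simp: interior_chains_def dest: inj_onD)
qed (use assms in \<open>simp_all add: lifting_problem_def\<close>)

lemma stage_invariant:
  "is_pos (stage k) \<and> pcar (stage k) \<subseteq> cell ` (({..<k} \<times> UNIV) \<inter> cell_index)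
    \<and> pos_hom (stage k) A proj"
proof (induction k)
  case 0
  show ?case
    by (simp add: is_pos_def pcar_def pord_def pos_hom_def)
next
  case (Suc k)
  show ?case
  proof (cases "lifting_problem k (stage k)")
    case False
    with Suc show ?thesis
      by auto
  next
    case True
    let ?n = "prob_dim k"
    interpret cell_attachment "stage k" ?n "prob_top k" "\<lambda>c. cell (k, c)"
      using Suc True by (intro cell_attachmentI) auto
    have stage_Suc: "stage (Suc k) = attach (stage k) ?n (prob_top k) (\<lambda>c. cell (k, c))"
      using True by simp
    have "pos_hom (stage (Suc k)) A proj"
      unfolding stage_Suc
    proof (rule pos_hom_attachI[OF is_pos_A])
      show "proj (cell (k, c)) = prob_bot k c" if "c \<in> interior_chains ?n" for c
        using that by (auto simp: interior_chains_def intro!: proj_cell cell_in_cell_index)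
    qed (use Suc True in \<open>auto simp: lifting_problem_def\<close>)
    moreover have "pcar (stage (Suc k)) \<subseteq> cell ` (({..<Suc k} \<times> UNIV) \<inter> cell_index)"
    proof -
      have "({..<k} \<times> UNIV) \<inter> cell_index \<subseteq> ({..<Suc k} \<times> UNIV) \<inter> cell_index"
        by auto
      then have "pcar (stage k) \<subseteq> cell ` (({..<Suc k} \<times> UNIV) \<inter> cell_index)"
        using Suc by (meson image_mono subset_trans)
      moreover have
        "(\<lambda>c. cell (k, c)) ` interior_chains ?n \<subseteq> cell ` (({..<Suc k} \<times> UNIV) \<inter> cell_index)"
        by (auto simp: interior_chains_def intro!: imageI cell_in_cell_index)
      ultimately show ?thesis
        by (simp add: stage_Suc pcar_attach)
    qed
    ultimately show ?thesis
      using is_pos_attach stage_Suc by simp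
  qed
qed

lemma is_pos_stage: "is_pos (stage k)"
  using stage_invariant by blast

lemma pos_hom_stage_proj: "pos_hom (stage k) A proj"
  using stage_invariant by blast

lemma cell_attachment_stage:
  "lifting_problem k (stage k) \<Longrightarrow>
    cell_attachment (stage k) (prob_dim k) (prob_top k) (\<lambda>c. cell (k, c))"
  using stage_invariant by (blast intro: cell_attachmentI)

lemma incseq_stage: "incseq (\<lambda>k. pcar (stage k))" "incseq (\<lambda>k. pord (stage k))"
  by (auto intro!: incseq_SucI simp: pcar_attach pord_attach)

lemma is_pos_colimit: "is_pos (pos_Union stage)"
  using is_pos_stage incseq_stage(2) by (rule is_pos_pos_Union)

lemma pos_hom_colimit_proj: "pos_hom (pos_Union stage) A proj"
  using pos_hom_stage_proj unfolding pos_hom_def by auto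

lemma pcar_colimit_subset_cells: "pcar (pos_Union stage) \<subseteq> cell ` cell_index"
  using stage_invariant by fastforce

lemma lifting_problem_solved:
  assumes "lifting_problem j (stage j)"
  defines "l \<equiv> cell_map (prob_dim j) (prob_top j) (\<lambda>c. cell (j, c))"
  shows "pos_hom (sd2 (prob_dim j)) (stage (Suc j)) l"
    and "c \<in> pcar (sd2_bdry (prob_dim j)) \<Longrightarrow> l c = prob_top j c"
    and "c \<in> pcar (sd2 (prob_dim j)) \<Longrightarrow> proj (l c) = prob_bot j c"
proof -
  interpret cell_attachment "stage j" "prob_dim j" "prob_top j" "\<lambda>c. cell (j, c)"
    using assms(1) by (rule cell_attachment_stage)
  show "pos_hom (sd2 (prob_dim j)) (stage (Suc j)) l"
    using assms(1) pos_hom_cell_map by (simp add: l_def)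
  show "c \<in> pcar (sd2_bdry (prob_dim j)) \<Longrightarrow> l c = prob_top j c"
    by (simp add: l_def cell_map_def)
  show "proj (l c) = prob_bot j c" if "c \<in> pcar (sd2 (prob_dim j))"
    using assms(1) that by (auto simp: l_def cell_map_def lifting_problem_def
        intro!: proj_cell cell_in_cell_index)
qed

lemma triv_fib_proj: "triv_fib (pos_Union stage) A proj"
  unfolding triv_fib_def
proof (intro conjI allI impI is_pos_colimit is_pos_A pos_hom_colimit_proj)
  fix n a b
  assume "pos_hom (sd2_bdry n) (pos_Union stage) a \<and> pos_hom (sd2 n) A b
    \<and> (\<forall>c\<in>pcar (sd2_bdry n). proj (a c) = b c)"
  then have a: "pos_hom (sd2_bdry n) (pos_Union stage) a" and b: "pos_hom (sd2 n) A b"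
    and glue: "\<forall>c\<in>pcar (sd2_bdry n). proj (a c) = b c"
    by auto
  obtain m where a_stage: "\<And>j. m \<le> j \<Longrightarrow> pos_hom (sd2_bdry n) (stage j) a"
    using a finite_pcar_sd2_bdry _ incseq_stage
    by (rule pos_hom_pos_Union_eventually) (auto simp: pord_sd2_bdry)
  define a' where "a' = restrict a (pcar (sd2_bdry n))"
  define b' where "b' = restrict b (pcar (sd2 n))"
  have "(n, a', b') \<in> problems"
    using a b pcar_colimit_subset_cells by (auto simp: problems_def a'_def b'_def pos_hom_def)
  then obtain j where "m \<le> j" and "problem j = (n, a', b')"
    by (rule problem_recurs)
  then have dim: "prob_dim j = n" and top: "prob_top j = a'" and bot: "prob_bot j = b'"
    by (simp_all add: prob_dim_def prob_top_def prob_bot_def)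
  have "pos_hom (sd2_bdry n) (stage j) a'"
    using a_stage[OF \<open>m \<le> j\<close>] by (rule pos_hom_cong) (auto simp: pord_sd2_bdry a'_def)
  moreover have "pos_hom (sd2 n) A b'"
    using b by (rule pos_hom_cong) (auto simp: pord_sd2 b'_def)
  ultimately have "lifting_problem j (stage j)"
    using glue pcar_sd2_bdry_subset
    by (auto simp: lifting_problem_def dim top bot a'_def b'_def)
  note solved = lifting_problem_solved[OF this, unfolded dim top bot]
  show "\<exists>l. pos_hom (sd2 n) (pos_Union stage) l \<and> (\<forall>c\<in>pcar (sd2_bdry n). l c = a c)
      \<and> (\<forall>c\<in>pcar (sd2 n). proj (l c) = b c)"
    by (intro exI[of _ "cell_map n a' (\<lambda>c. cell (j, c))"] conjI ballI
        pos_hom_pos_Union[where X = stage, OF solved(1)])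
      (simp_all add: solved(2,3), simp_all add: a'_def b'_def)
qed

lemma pos_retract_stage_0:
  assumes pushout_retract: "\<And>n (X :: 'u pos) Y f g h.
      pos_pushout n X Y f g h \<Longrightarrow> pos_retract A Y \<Longrightarrow> pos_retract A X"
    and "pos_retract A (stage k)"
  shows "pos_retract A (stage 0)"
  using assms(2)
proof (induction k)
  case (Suc k)
  show ?case
  proof (cases "lifting_problem k (stage k)")
    case True
    then interpret cell_attachment "stage k" "prob_dim k" "prob_top k" "\<lambda>c. cell (k, c)"
      by (rule cell_attachment_stage)
    have "pos_retract A (stage k)"
      using pushout_retract[OF pos_pushout_attach] Suc.prems True by simp
    then show ?thesis
      by (rule Suc.IH)
  qed (use Suc in simp)
qed

end

theorem lemma6p1:
  fixes A :: "'u pos"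
  assumes "infinite (UNIV :: 'u set)"
    and "is_pos A" and "finite (pcar A)" and "pcar A \<noteq> {}"
    and "\<And>n (X :: 'u pos) (Y :: 'u pos) f g h.
           pos_pushout n X Y f g h \<Longrightarrow> pos_retract A Y \<Longrightarrow> pos_retract A X"
  shows "\<not> pos_cofibrant A"
proof
  assume cofibrant: "pos_cofibrant A"
  obtain f :: "nat \<Rightarrow> 'u" where "inj f"
    using infinite_countable_subset[OF assms(1)] by blast
  interpret small_object A f
    using assms(2,3) \<open>inj f\<close> by unfold_locales
  have "pos_hom A A id"
    unfolding pos_hom_def by simp
  then obtain l where l: "pos_hom A (pos_Union stage) l" and proj_l: "\<forall>x\<in>pcar A. proj (l x) = x"
    using cofibrant triv_fib_proj unfolding pos_cofibrant_def by fastforce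
  obtain m where "\<And>j. m \<le> j \<Longrightarrow> pos_hom A (stage j) l"
    using pos_hom_pos_Union_eventually[OF l assms(3) is_posD(1)[OF assms(2)] incseq_stage] by blast
  then have "pos_retract A (stage m)"
    unfolding pos_retract_def using pos_hom_stage_proj proj_l by blast
  then have "pos_retract A (stage 0)"
    using assms(5) by (intro pos_retract_stage_0)
  then show False
    using assms(4) by (simp add: not_pos_retract_empty)
qed

end
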